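(* Consider the discrete-time plant $$z_{k+1} = A_{ss} z_k + B_{1s} d_k + B_{2s} u_k,\quad e_k = C_{1s} z_k + D_{11} d_k + D_{12} u_k,\quad \hat y_k = z_k,\quad z_0\in\mathbb{I},$$ with $z_k\in\mathbb{R}^N$, $N=n+\bar N$, $u_k\in\mathbb{R}^{n_u}$, and $\mathbb{I} = \{(\bar p,\bar q) : \bar p\in\varepsilon(P),\ \bar q\in\varepsilon(Q)\}$, where $P\in\mathbb{S}^n$, $Q\in\mathbb{S}^{\bar N}$ are positive definite and $\varepsilon(P)=\{y: y^TPy\le 1\}$ (this is the lifted LPV model with all scheduling-parameter input matrices equal to zero, i.e., an LTI model). Then a static state-feedback LTI controller $u_k = D^c \hat y_k$ such that the closed loop is stable and $$\sup \{\lVert e \rVert_{\ell_2} \mid \lVert d \rVert_{\ell_2} \leq 1,\ z_0 \in \mathbb{I} \}< \gamma$$ exists if there exist a positive definite matrix $R \in \mathbb{S}^{N}$, a matrix $S \in \mathbb{R}^{n_u \times N}$, and positive scalars $b$, $f_{11}$, $f_{12}$, $f_2$ such that $$\begin{bmatrix} - R & A_{ss} R + B_{2s} S & B_{1s} & 0 \\ \ast & - R & 0 & (C_{1s} R + D_{12} S)^T \\ \ast & \ast & -f_2 I & D_{11}^T \\ \ast & \ast & \ast & -b I \end{bmatrix} \prec 0, \quad b + f_{11} + f_{12} + f_2 < 2\gamma, \quad \begin{bmatrix} F_1 & \Gamma^T \\ \Gamma & R \end{bmatrix} \succ 0,$$ where $\Gamma = \mathrm{diag}(P^{-1/2}, Q^{-1/2})$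 and $F_1 = \mathrm{diag}(f_{11} I_n, f_{12}I_{\bar{N}})$. If this problem is feasible, the controller is $u = SR^{-1}\hat y$, i.e., for the underlying nonlinear system with lifting map $\Phi$ and no measurement noise, $u = SR^{-1}\Phi(x)$.
   Context: $\ast$ denotes entries inferred by symmetry; $\mathbb{S}^m$ denotes real symmetric $m\times m$ matrices. *)

theory Defs
  imports "HOL-Analysis.Analysis"
begin

definition sym_mat :: "real^'n^'n \<Rightarrow> bool" where
  "sym_mat M \<longleftrightarrow> transpose M = M"

definition pos_def :: "real^'n^'n \<Rightarrow> bool" where
  "pos_def M \<longleftrightarrow> sym_mat M \<and> (\<forall>x. x \<noteq> 0 \<longrightarrow> 0 < x \<bullet> (M *v x))"

definition neg_def :: "real^'n^'n \<Rightarrow> bool" where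
  "neg_def M \<longleftrightarrow> pos_def (- M)"

definition inv_sqrt :: "real^'n^'n \<Rightarrow> real^'n^'n" where
  "inv_sqrt P = (THE M. pos_def M \<and> M ** M = matrix_inv P)"

definition block2 :: "real^'a^'a \<Rightarrow> real^'b^'a \<Rightarrow> real^'a^'b \<Rightarrow> real^'b^'b
    \<Rightarrow> real^('a + 'b)^('a + 'b)" where
  "block2 M11 M12 M21 M22 = (\<chi> i j. case i of
       Inl a \<Rightarrow> (case j of Inl a' \<Rightarrow> M11 $ a $ a' | Inr b' \<Rightarrow> M12 $ a $ b')
     | Inr b \<Rightarrow> (case j of Inl a' \<Rightarrow> M21 $ b $ a' | Inr b' \<Rightarrow> M22 $ b $ b'))"

definition blockr :: "real^'c^'a \<Rightarrow> real^'d^'a \<Rightarrow> real^'c^'b \<Rightarrow> real^'d^'b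
    \<Rightarrow> real^('c + 'd)^('a + 'b)" where
  "blockr M11 M12 M21 M22 = (\<chi> i j. case i of
       Inl a \<Rightarrow> (case j of Inl a' \<Rightarrow> M11 $ a $ a' | Inr b' \<Rightarrow> M12 $ a $ b')
     | Inr b \<Rightarrow> (case j of Inl a' \<Rightarrow> M21 $ b $ a' | Inr b' \<Rightarrow> M22 $ b $ b'))"

definition vjoin :: "real^'a \<Rightarrow> real^'b \<Rightarrow> real^('a + 'b)" where
  "vjoin p q = (\<chi> i. case i of Inl a \<Rightarrow> p $ a | Inr b \<Rightarrow> q $ b)"

definition ellipsoid :: "real^'n^'n \<Rightarrow> (real^'n) set" where
  "ellipsoid P = {y. y \<bullet> (P *v y) \<le> 1}"

definition init_set :: "real^'n^'n \<Rightarrow> real^'m^'m \<Rightarrow> (real^('n + 'm)) set" where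
  "init_set P Q = {vjoin p q | p q. p \<in> ellipsoid P \<and> q \<in> ellipsoid Q}"

definition l2norm :: "(nat \<Rightarrow> real^'a) \<Rightarrow> ennreal" where
  "l2norm s = (if summable (\<lambda>k. (norm (s k))\<^sup>2)
               then ennreal (sqrt (\<Sum>k. (norm (s k))\<^sup>2)) else \<infinity>)"

primrec cl_state :: "real^'N^'N \<Rightarrow> real^'d^'N \<Rightarrow> real^'u^'N \<Rightarrow> real^'N^'u
    \<Rightarrow> real^'N \<Rightarrow> (nat \<Rightarrow> real^'d) \<Rightarrow> nat \<Rightarrow> real^'N" where
  "cl_state A B1 B2 Dc z0 d 0 = z0"
| "cl_state A B1 B2 Dc z0 d (Suc k) =
     (let z = cl_state A B1 B2 Dc z0 d k in A *v z + B1 *v d k + B2 *v (Dc *v z))"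

definition cl_output :: "real^'N^'N \<Rightarrow> real^'d^'N \<Rightarrow> real^'u^'N \<Rightarrow> real^'N^'e
    \<Rightarrow> real^'d^'e \<Rightarrow> real^'u^'e \<Rightarrow> real^'N^'u
    \<Rightarrow> real^'N \<Rightarrow> (nat \<Rightarrow> real^'d) \<Rightarrow> nat \<Rightarrow> real^'e" where
  "cl_output A B1 B2 C1 D11 D12 Dc z0 d k =
     (let z = cl_state A B1 B2 Dc z0 d k in C1 *v z + D11 *v d k + D12 *v (Dc *v z))"

definition cl_stable :: "real^'N^'N \<Rightarrow> real^'d^'N \<Rightarrow> real^'u^'N \<Rightarrow> real^'N^'u \<Rightarrow> bool" where
  "cl_stable A B1 B2 Dc \<longleftrightarrow> (\<forall>z0. (\<lambda>k. cl_state A B1 B2 Dc z0 (\<lambda>_. 0) k) \<longlonglongrightarrow> 0)"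

end

theory Submission
  imports Defs
begin

text \<open>
  Put \<open>X = R\<^sup>-\<^sup>1\<close> and \<open>V z = z \<bullet> X z\<close>. Testing the first LMI at
  \<open>(X z', X z, d, e / b)\<close>, where \<open>z'\<close> and \<open>e\<close> are the successor state and the output of the
  closed loop with \<open>u = S X z\<close>, gives the dissipation inequality
  \<open>V z' - V z + |e|\<^sup>2 / b - f\<^sub>2 |d|\<^sup>2 \<le> - \<epsilon> |X z|\<^sup>2\<close> with \<open>\<epsilon> > 0\<close> from coercivity.
  Summed along a trajectory it shows that undisturbed trajectories have square summable
  \<open>X z\<^sub>k\<close>, hence tend to \<open>0\<close>, and that \<open>\<parallel>e\<parallel>\<^sup>2 \<le> b (V z\<^sub>0 + f\<^sub>2 \<parallel>d\<parallel>\<^sup>2)\<close>.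
  The second LMI, tested at \<open>((u\<^sub>1, u\<^sub>2), - X z\<^sub>0)\<close>, is a Schur complement bounding \<open>V\<close> by
  \<open>f\<^sub>1\<^sub>1 + f\<^sub>1\<^sub>2\<close> on the initial set \<open>z\<^sub>0 = (P\<^sup>-\<^sup>1\<^sup>/\<^sup>2 u\<^sub>1, Q\<^sup>-\<^sup>1\<^sup>/\<^sup>2 u\<^sub>2)\<close>, \<open>|u\<^sub>i| \<le> 1\<close>.
  The square roots are defined by a definite description; they exist and are unique by the
  spectral theorem. Finally
  \<open>\<parallel>e\<parallel> \<le> \<surd>(b (f\<^sub>1\<^sub>1 + f\<^sub>1\<^sub>2 + f\<^sub>2)) \<le> (b + f\<^sub>1\<^sub>1 + f\<^sub>1\<^sub>2 + f\<^sub>2) / 2 < \<gamma>\<close>.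
\<close>

section \<open>Block matrices and quadratic forms\<close>

lemma sum_UNIV_Plus:
  "sum f (UNIV :: ('a::finite + 'b::finite) set) = (\<Sum>a\<in>UNIV. f (Inl a)) + (\<Sum>b\<in>UNIV. f (Inr b))"
  using sum.Plus[of "UNIV :: 'a set" "UNIV :: 'b set" f] by (simp add: comp_def)

lemma block2_mult_vjoin:
  "block2 M11 M12 M21 M22 *v vjoin x y = vjoin (M11 *v x + M12 *v y) (M21 *v x + M22 *v y)"
  by (auto simp: vec_eq_iff matrix_vector_mult_def block2_def vjoin_def sum_UNIV_Plus
      split: sum.splits)

lemma blockr_mult_vjoin:
  "blockr M11 M12 M21 M22 *v vjoin x y = vjoin (M11 *v x + M12 *v y) (M21 *v x + M22 *v y)"
  by (auto simp: vec_eq_iff matrix_vector_mult_def blockr_def vjoin_def sum_UNIV_Plus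
      split: sum.splits)

lemma inner_vjoin: "vjoin a b \<bullet> vjoin c d = a \<bullet> c + b \<bullet> (d :: real^'b)"
  by (simp add: inner_vec_def vjoin_def sum_UNIV_Plus)

lemma norm_vjoin_power2: "(norm (vjoin a b))\<^sup>2 = (norm a)\<^sup>2 + (norm (b :: real^'b))\<^sup>2"
  by (simp add: power2_norm_eq_inner inner_vjoin)

lemma inner_vector_matrix: "x \<bullet> (y v* M) = (M *v x) \<bullet> (y :: real^'a)"
  by (metis dot_lmul_matrix inner_commute)

lemma sym_mat_inner: "sym_mat M \<Longrightarrow> x \<bullet> (M *v y) = (M *v x) \<bullet> (y :: real^'a)"
  unfolding sym_mat_def by (metis inner_vector_matrix transpose_matrix_vector)

lemma matrix_vector_mult_uminus_left: "(- M) *v x = - (M *v (x :: real^'a))"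
  by (simp add: vec_eq_iff matrix_vector_mult_def sum_negf)

lemma matrix_vector_mult_uminus_right: "M *v (- x) = - (M *v (x :: real^'a))"
  by (simp add: vec_eq_iff matrix_vector_mult_def sum_negf)

lemma quadratic_form_scaleR:
  "(c *\<^sub>R x) \<bullet> (M *v (c *\<^sub>R x)) = c\<^sup>2 * (x \<bullet> (M *v (x :: real^'a)))"
  by (simp add: matrix_vector_mult_scaleR power2_eq_square)

lemma quadratic_form_normalize:
  "x \<bullet> (M *v x) = (norm x)\<^sup>2 * ((x /\<^sub>R norm x) \<bullet> (M *v (x /\<^sub>R norm (x :: real^'a))))"
proof (cases "x = 0")
  case False
  then have "x = norm x *\<^sub>R (x /\<^sub>R norm x)" by simp
  then show ?thesis by (metis quadratic_form_scaleR)
qed simp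

lemma pos_def_nonneg: "pos_def M \<Longrightarrow> 0 \<le> x \<bullet> (M *v x)"
  unfolding pos_def_def by (cases "x = 0") (auto intro: less_imp_le)

lemma pos_def_invertible:
  assumes "pos_def (M :: real^'a^'a)" shows "invertible M"
proof -
  have "\<forall>x. M *v x = 0 \<longrightarrow> x = 0" using assms unfolding pos_def_def by force
  then show ?thesis by (simp add: invertible_left_inverse matrix_left_invertible_ker)
qed

lemma matrix_inv_inverse:
  assumes "invertible (M :: real^'a^'a)"
  shows "M ** matrix_inv M = mat 1" "matrix_inv M ** M = mat 1"
  using someI_ex[OF assms[unfolded invertible_def]] unfolding matrix_inv_def by auto

lemma matrix_inv_mult_vector:
  assumes "invertible (M :: real^'a^'a)"
  shows "M *v (matrix_inv M *v x) = x" "matrix_inv M *v (M *v x) = x"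
  by (simp_all add: matrix_vector_mul_assoc matrix_inv_inverse[OF assms])

lemma sym_mat_matrix_inv:
  assumes "invertible (M :: real^'a^'a)" "sym_mat M"
  shows "sym_mat (matrix_inv M)"
proof -
  have "transpose (matrix_inv M) = transpose (matrix_inv M) ** (M ** matrix_inv M)"
    by (simp add: matrix_inv_inverse[OF assms(1)] matrix_mul_rid)
  also have "\<dots> = transpose (M ** matrix_inv M) ** matrix_inv M"
    using assms(2) by (simp add: matrix_mul_assoc matrix_transpose_mul sym_mat_def)
  also have "\<dots> = matrix_inv M"
    by (simp add: matrix_inv_inverse[OF assms(1)] matrix_mul_lid)
  finally show ?thesis unfolding sym_mat_def .
qed

lemma pos_def_matrix_inv:
  assumes "pos_def (M :: real^'a^'a)" shows "pos_def (matrix_inv M)"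
  unfolding pos_def_def
proof (intro conjI allI impI)
  have "invertible M" using assms by (rule pos_def_invertible)
  then show "sym_mat (matrix_inv M)"
    using assms sym_mat_matrix_inv unfolding pos_def_def by blast
  fix x :: "real^'a" assume "x \<noteq> 0"
  define y where "y = matrix_inv M *v x"
  have x: "x = M *v y" using matrix_inv_mult_vector[OF \<open>invertible M\<close>] y_def by simp
  with \<open>x \<noteq> 0\<close> have "y \<noteq> 0" by auto
  then have "0 < y \<bullet> (M *v y)" using assms unfolding pos_def_def by auto
  then show "0 < x \<bullet> (matrix_inv M *v x)"
    by (simp add: x matrix_inv_mult_vector[OF \<open>invertible M\<close>] inner_commute)
qed

lemma pos_def_coercive:
  assumes "pos_def (M :: real^'a^'a)"
  obtains \<epsilon> where "0 < \<epsilon>" "\<And>x. \<epsilon> * (norm x)\<^sup>2 \<le> x \<bullet> (M *v x)"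
proof -
  have "continuous_on (sphere 0 1) (\<lambda>x. x \<bullet> (M *v x))"
    by (intro continuous_intros matrix_vector_mult_linear_continuous_on)
  moreover have "sphere (0 :: real^'a) 1 \<noteq> {}" by (simp add: sphere_eq_empty)
  ultimately obtain x0 where x0: "x0 \<in> sphere 0 1"
    and min: "\<And>y. y \<in> sphere 0 1 \<Longrightarrow> x0 \<bullet> (M *v x0) \<le> y \<bullet> (M *v y)"
    using continuous_attains_inf[OF compact_sphere] by blast
  have "x0 \<bullet> (M *v x0) * (norm x)\<^sup>2 \<le> x \<bullet> (M *v x)" for x
  proof (cases "x = 0")
    case False
    then have "x0 \<bullet> (M *v x0) \<le> (x /\<^sub>R norm x) \<bullet> (M *v (x /\<^sub>R norm x))"
      by (intro min) simp
    then have "x0 \<bullet> (M *v x0) * (norm x)\<^sup>2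
        \<le> (norm x)\<^sup>2 * ((x /\<^sub>R norm x) \<bullet> (M *v (x /\<^sub>R norm x)))"
      by (metis mult.commute mult_left_mono zero_le_power2)
    then show ?thesis using quadratic_form_normalize[of x M] by linarith
  qed simp
  moreover have "x0 \<noteq> 0" using x0 by auto
  then have "0 < x0 \<bullet> (M *v x0)" using assms unfolding pos_def_def by blast
  ultimately show thesis using that by blast
qed

section \<open>Spectral theorem and positive definite square roots\<close>

lemma quadratic_nonpos_imp_linear_coeff_zero:
  fixes a c :: real
  assumes "\<And>t. 2 * t * a + t\<^sup>2 * c \<le> 0"
  shows "a = 0"
proof -
  define d where "d = 1 + \<bar>c\<bar>"
  have "0 < d" "0 < 2 * d + c" unfolding d_def by auto
  have "a\<^sup>2 * (2 * d + c) = d\<^sup>2 * (2 * (a / d) * a + (a / d)\<^sup>2 * c)"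
    using \<open>0 < d\<close> by (simp add: field_simps power2_eq_square)
  also have "\<dots> \<le> 0" using assms[of "a / d"] by (simp add: mult_nonneg_nonpos)
  finally have "a\<^sup>2 \<le> 0" using \<open>0 < 2 * d + c\<close> by (simp add: mult_le_0_iff)
  then show ?thesis by simp
qed

lemma quadratic_form_add_scaleR:
  assumes "sym_mat (T :: real^'n^'n)"
  shows "(v + t *\<^sub>R w) \<bullet> (T *v (v + t *\<^sub>R w))
    = v \<bullet> (T *v v) + 2 * t * (w \<bullet> (T *v v)) + t\<^sup>2 * (w \<bullet> (T *v w))"
proof -
  have "v \<bullet> (T *v w) = w \<bullet> (T *v v)"
    using sym_mat_inner[OF assms] by (metis inner_commute)
  then show ?thesis
    by (simp add: matrix_vector_right_distrib matrix_vector_mult_scaleR inner_add_left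
        inner_add_right power2_eq_square algebra_simps)
qed

text \<open>First-order optimality of the Rayleigh quotient, tested along the lines \<open>v + t w\<close>.\<close>
lemma quadratic_form_max_on_sphere:
  fixes T :: "real^'n^'n"
  assumes "sym_mat T" "subspace W" "v \<in> W" "norm v = 1"
    and max: "\<And>y. y \<in> W \<Longrightarrow> norm y = 1 \<Longrightarrow> y \<bullet> (T *v y) \<le> v \<bullet> (T *v v)"
    and "w \<in> W"
  shows "w \<bullet> (T *v v) = (v \<bullet> (T *v v)) * (w \<bullet> v)"
proof -
  define \<mu> where "\<mu> = v \<bullet> (T *v v)"
  have bound: "y \<bullet> (T *v y) \<le> \<mu> * (y \<bullet> y)" if "y \<in> W" for y
  proof (cases "y = 0")
    case False
    then have "(y /\<^sub>R norm y) \<bullet> (T *v (y /\<^sub>R norm y)) \<le> \<mu>"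
      unfolding \<mu>_def using \<open>subspace W\<close> that by (intro max) (simp_all add: subspace_scale)
    then have "(norm y)\<^sup>2 * ((y /\<^sub>R norm y) \<bullet> (T *v (y /\<^sub>R norm y))) \<le> \<mu> * (norm y)\<^sup>2"
      by (metis mult.commute mult_left_mono zero_le_power2)
    then have "y \<bullet> (T *v y) \<le> \<mu> * (norm y)\<^sup>2" using quadratic_form_normalize[of y T] by linarith
    then show ?thesis by (simp only: power2_norm_eq_inner)
  qed simp
  have "v \<bullet> v = 1" using \<open>norm v = 1\<close> by (simp add: norm_eq_1)
  have "2 * t * (w \<bullet> (T *v v) - \<mu> * (w \<bullet> v)) + t\<^sup>2 * (w \<bullet> (T *v w) - \<mu> * (w \<bullet> w)) \<le> 0"
    for t
  proof -
    have "v + t *\<^sub>R w \<in> W" using assms by (simp add: subspace_add subspace_scale)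
    then have "(v + t *\<^sub>R w) \<bullet> (T *v (v + t *\<^sub>R w)) \<le> \<mu> * ((v + t *\<^sub>R w) \<bullet> (v + t *\<^sub>R w))"
      by (rule bound)
    then show ?thesis
      using \<open>v \<bullet> v = 1\<close> unfolding quadratic_form_add_scaleR[OF \<open>sym_mat T\<close>] \<mu>_def[symmetric]
      by (simp add: inner_add_left inner_add_right inner_commute[of v w] power2_eq_square algebra_simps)
  qed
  then have "w \<bullet> (T *v v) - \<mu> * (w \<bullet> v) = 0"
    by (rule quadratic_nonpos_imp_linear_coeff_zero)
  then show ?thesis by (simp add: \<mu>_def)
qed

lemma sym_mat_invariant_subspace_eigenvector:
  fixes T :: "real^'n^'n"
  assumes "sym_mat T" "subspace W" "W \<noteq> {0}" and invariant: "\<And>x. x \<in> W \<Longrightarrow> T *v x \<in> W"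
  obtains v \<mu> where "v \<in> W" "norm v = 1" "T *v v = \<mu> *\<^sub>R v"
proof -
  obtain a where "a \<in> W" "a \<noteq> 0" using \<open>W \<noteq> {0}\<close> \<open>subspace W\<close> subspace_0 by blast
  have "\<exists>v\<in>sphere 0 1 \<inter> W. \<forall>y\<in>sphere 0 1 \<inter> W. y \<bullet> (T *v y) \<le> v \<bullet> (T *v v)"
  proof (rule continuous_attains_sup)
    show "compact (sphere 0 1 \<inter> W)"
      using \<open>subspace W\<close> by (simp add: closed_subspace compact_Int_closed)
    have "a /\<^sub>R norm a \<in> sphere 0 1 \<inter> W"
      using \<open>a \<in> W\<close> \<open>a \<noteq> 0\<close> \<open>subspace W\<close> by (simp add: subspace_scale)
    then show "sphere 0 1 \<inter> W \<noteq> {}" by blast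
    show "continuous_on (sphere 0 1 \<inter> W) (\<lambda>x. x \<bullet> (T *v x))"
      by (intro continuous_intros matrix_vector_mult_linear_continuous_on)
  qed
  then obtain v where v: "v \<in> W" "norm v = 1"
    and max: "\<And>y. y \<in> W \<Longrightarrow> norm y = 1 \<Longrightarrow> y \<bullet> (T *v y) \<le> v \<bullet> (T *v v)"
    by auto
  let ?\<mu> = "v \<bullet> (T *v v)"
  have y_W: "T *v v - ?\<mu> *\<^sub>R v \<in> W"
    using v invariant \<open>subspace W\<close> by (simp add: subspace_diff subspace_scale)
  have "(T *v v - ?\<mu> *\<^sub>R v) \<bullet> (T *v v) = ?\<mu> * ((T *v v - ?\<mu> *\<^sub>R v) \<bullet> v)"
    by (rule quadratic_form_max_on_sphere[OF \<open>sym_mat T\<close> \<open>subspace W\<close> v _ y_W]) (rule max)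
  then have "(T *v v - ?\<mu> *\<^sub>R v) \<bullet> (T *v v - ?\<mu> *\<^sub>R v) = 0"
    by (simp add: inner_diff_right)
  then have "T *v v = ?\<mu> *\<^sub>R v" by simp
  with v show thesis by (rule that)
qed

definition orthonormal_eigenvectors :: "real^'n^'n \<Rightarrow> (real^'n) set \<Rightarrow> bool" where
  "orthonormal_eigenvectors T B \<longleftrightarrow> finite B \<and> pairwise orthogonal B \<and>
     (\<forall>u\<in>B. norm u = 1 \<and> (\<exists>c. T *v u = c *\<^sub>R u))"

lemma orthonormal_eigenvectors_extend:
  fixes T :: "real^'n^'n"
  assumes "sym_mat T" and B: "orthonormal_eigenvectors T B" and "span B \<noteq> UNIV"
  obtains v where "v \<notin> B" "orthonormal_eigenvectors T (insert v B)"
proof -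
  have "orthogonal_comp B \<noteq> {0}"
    using span_not_UNIV_orthogonal[OF \<open>span B \<noteq> UNIV\<close>]
    by (auto simp: orthogonal_comp_def orthogonal_def span_base inner_commute)
  moreover have "T *v x \<in> orthogonal_comp B" if "x \<in> orthogonal_comp B" for x
    unfolding orthogonal_comp_def orthogonal_def
  proof (intro CollectI ballI)
    fix u assume "u \<in> B"
    then obtain c where "T *v u = c *\<^sub>R u" using B unfolding orthonormal_eigenvectors_def by blast
    then show "u \<bullet> (T *v x) = 0"
      using that \<open>u \<in> B\<close> sym_mat_inner[OF \<open>sym_mat T\<close>, of u x]
      by (simp add: orthogonal_comp_def orthogonal_def)
  qed
  ultimately obtain v \<mu> where v: "v \<in> orthogonal_comp B" "norm v = 1" "T *v v = \<mu> *\<^sub>R v"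
    using sym_mat_invariant_subspace_eigenvector[OF \<open>sym_mat T\<close> subspace_orthogonal_comp] by blast
  then have vB: "u \<bullet> v = 0" if "u \<in> B" for u
    using that by (simp add: orthogonal_comp_def orthogonal_def)
  then have "v \<notin> B" using \<open>norm v = 1\<close> by fastforce
  moreover have "orthonormal_eigenvectors T (insert v B)"
    using B v vB unfolding orthonormal_eigenvectors_def pairwise_insert orthogonal_def
    by (auto simp: inner_commute[of v])
  ultimately show thesis by (rule that)
qed

lemma sym_mat_orthonormal_eigenbasis:
  fixes T :: "real^'n^'n"
  assumes "sym_mat T"
  obtains B where "orthonormal_eigenvectors T B" "span B = UNIV"
proof -
  have card_le: "card B < DIM(real^'n) + 1" if "orthonormal_eigenvectors T B" for B
  proof -
    have "pairwise orthogonal B" "0 \<notin> B"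
      using that unfolding orthonormal_eigenvectors_def by force+
    then have "card B \<le> DIM(real^'n)"
      by (intro independent_card_le pairwise_orthogonal_independent)
    then show ?thesis by simp
  qed
  have "orthonormal_eigenvectors T {}" unfolding orthonormal_eigenvectors_def by simp
  then obtain B where B: "orthonormal_eigenvectors T B"
    and maximal: "\<forall>B'. orthonormal_eigenvectors T B' \<longrightarrow> card B' \<le> card B"
    using ex_has_greatest_nat[of _ _ card "DIM(real^'n) + 1"] card_le by blast
  have "span B = UNIV"
  proof (rule ccontr)
    assume "span B \<noteq> UNIV"
    then obtain v where "v \<notin> B" "orthonormal_eigenvectors T (insert v B)"
      using orthonormal_eigenvectors_extend[OF assms B] by blast
    moreover have "finite B" using B unfolding orthonormal_eigenvectors_def by simp
    ultimately have "card (insert v B) > card B" by simp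
    with maximal \<open>orthonormal_eigenvectors T (insert v B)\<close> show False by force
  qed
  with B show thesis by (rule that)
qed

lemma orthonormal_eigenbasis_expand:
  assumes "orthonormal_eigenvectors T B" "span B = UNIV"
  shows "(\<Sum>u\<in>B. (x \<bullet> u) *\<^sub>R u) = x"
  using assms unfolding orthonormal_eigenvectors_def
  by (intro orthonormal_basis_expand) auto

lemma orthonormal_inner:
  assumes "pairwise orthogonal B" "\<And>u. u \<in> B \<Longrightarrow> norm u = 1" "u \<in> B" "u' \<in> B"
  shows "u \<bullet> u' = (if u = u' then 1 else 0)"
  using assms unfolding pairwise_def orthogonal_def by (auto simp: norm_eq_1)

definition spectral_matrix :: "(real^'n \<Rightarrow> real) \<Rightarrow> (real^'n) set \<Rightarrow> real^'n^'n" where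
  "spectral_matrix f B = (\<chi> i j. \<Sum>u\<in>B. f u * u$i * u$j)"

lemma spectral_matrix_mult_vector:
  "spectral_matrix f B *v x = (\<Sum>u\<in>B. (f u * (u \<bullet> x)) *\<^sub>R u)"
  by (simp add: vec_eq_iff spectral_matrix_def matrix_vector_mult_def sum_component inner_vec_def
      sum_distrib_left sum_distrib_right sum.swap[of _ B] algebra_simps)

lemma sym_mat_spectral_matrix: "sym_mat (spectral_matrix f B)"
  by (simp add: sym_mat_def vec_eq_iff transpose_def spectral_matrix_def mult.commute mult.left_commute)

lemma spectral_matrix_mult_basis_vector:
  assumes "finite B" "pairwise orthogonal B" "\<And>u. u \<in> B \<Longrightarrow> norm u = 1" "u \<in> B"
  shows "spectral_matrix f B *v u = f u *\<^sub>R u"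
proof -
  have "spectral_matrix f B *v u = (\<Sum>u'\<in>B. if u' = u then f u *\<^sub>R u else 0)"
    unfolding spectral_matrix_mult_vector
    by (rule sum.cong) (use orthonormal_inner[OF assms(2,3) _ assms(4)] in \<open>auto simp: inner_commute\<close>)
  then show ?thesis using assms(1,4) by simp
qed

lemma matrix_eq_on_spanning_set:
  fixes M N :: "real^'n^'m"
  assumes "span B = UNIV" "\<And>u. u \<in> B \<Longrightarrow> M *v u = N *v u"
  shows "M = N"
  unfolding matrix_eq
  using linear_eq_on_span[OF matrix_vector_mul_linear matrix_vector_mul_linear, of B] assms
  by auto

lemma pos_def_sqrt_exists:
  fixes T :: "real^'n^'n"
  assumes "pos_def T"
  obtains M where "pos_def M" "M ** M = T"
proof -
  have "sym_mat T" using assms unfolding pos_def_def by simp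
  then obtain B where B: "orthonormal_eigenvectors T B" and "span B = UNIV"
    by (rule sym_mat_orthonormal_eigenbasis)
  then have "finite B" "pairwise orthogonal B" and unit: "\<And>u. u \<in> B \<Longrightarrow> norm u = 1"
    unfolding orthonormal_eigenvectors_def by auto
  have "\<forall>u\<in>B. \<exists>c. T *v u = c *\<^sub>R u" using B unfolding orthonormal_eigenvectors_def by simp
  from bchoice[OF this] obtain eigval where eig: "\<And>u. u \<in> B \<Longrightarrow> T *v u = eigval u *\<^sub>R u" by auto
  have eigval_pos: "0 < eigval u" if "u \<in> B" for u
  proof -
    have "u \<noteq> 0" using unit[OF that] by auto
    then have "0 < u \<bullet> (T *v u)" using assms unfolding pos_def_def by simp
    then show ?thesis using eig[OF that] unit[OF that] by (simp add: norm_eq_1)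
  qed
  define M where "M = spectral_matrix (\<lambda>u. sqrt (eigval u)) B"
  have "(M ** M) *v u = T *v u" if "u \<in> B" for u
    using that eigval_pos[OF that] eig[OF that]
      spectral_matrix_mult_basis_vector[OF \<open>finite B\<close> \<open>pairwise orthogonal B\<close> unit]
    by (simp add: M_def matrix_vector_mul_assoc[symmetric] matrix_vector_mult_scaleR)
  then have "M ** M = T" by (rule matrix_eq_on_spanning_set[OF \<open>span B = UNIV\<close>])
  moreover have "pos_def M"
    unfolding pos_def_def
  proof (intro conjI allI impI)
    show "sym_mat M" unfolding M_def by (rule sym_mat_spectral_matrix)
    fix x :: "real^'n" assume "x \<noteq> 0"
    then obtain u where "u \<in> B" "u \<bullet> x \<noteq> 0"
      using orthonormal_eigenbasis_expand[OF B \<open>span B = UNIV\<close>, of x]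
      by (metis (no_types, lifting) inner_commute scale_zero_left sum.neutral)
    have "x \<bullet> (M *v x) = (\<Sum>u\<in>B. sqrt (eigval u) * (u \<bullet> x)\<^sup>2)"
      by (simp add: M_def spectral_matrix_mult_vector inner_sum_right power2_eq_square
          inner_commute algebra_simps)
    also have "\<dots> > 0"
    proof (rule sum_pos2[OF \<open>finite B\<close> \<open>u \<in> B\<close>])
      show "0 < sqrt (eigval u) * (u \<bullet> x)\<^sup>2" using eigval_pos[OF \<open>u \<in> B\<close>] \<open>u \<bullet> x \<noteq> 0\<close> by simp
      show "0 \<le> sqrt (eigval u') * (u' \<bullet> x)\<^sup>2" if "u' \<in> B" for u'
        using eigval_pos[OF that] by simp
    qed
    finally show "0 < x \<bullet> (M *v x)" .
  qed
  ultimately show thesis by (rule that[rotated])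
qed

lemma pos_def_sqrt_unique:
  fixes M N :: "real^'n^'n"
  assumes "pos_def M" "pos_def N" "M ** M = N ** N"
  shows "M = N"
proof -
  have "sym_mat N" using assms(2) unfolding pos_def_def by simp
  then obtain B where B: "orthonormal_eigenvectors N B" and "span B = UNIV"
    by (rule sym_mat_orthonormal_eigenbasis)
  show ?thesis
  proof (rule matrix_eq_on_spanning_set[OF \<open>span B = UNIV\<close>])
    fix u assume "u \<in> B"
    then obtain c where Nu: "N *v u = c *\<^sub>R u" and "norm u = 1"
      using B unfolding orthonormal_eigenvectors_def by blast
    have "0 \<le> c"
      using pos_def_nonneg[OF assms(2), of u] Nu \<open>norm u = 1\<close> by (simp add: norm_eq_1)
    define y where "y = M *v u - c *\<^sub>R u"
    have "M *v (M *v u) = N *v (N *v u)"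
      using assms(3) by (simp add: matrix_vector_mul_assoc)
    then have "M *v y = - c *\<^sub>R y"
      by (simp add: y_def Nu matrix_vector_mult_diff_distrib matrix_vector_mult_scaleR algebra_simps)
    then have "y \<bullet> (M *v y) = - c * (y \<bullet> y)" by simp
    moreover have "0 \<le> c * (y \<bullet> y)" using \<open>0 \<le> c\<close> by simp
    ultimately have "y = 0"
      using assms(1) unfolding pos_def_def by force
    then show "M *v u = N *v u" by (simp add: y_def Nu)
  qed
qed

lemma inv_sqrt:
  assumes "pos_def (P :: real^'n^'n)"
  shows "pos_def (inv_sqrt P)" "inv_sqrt P ** inv_sqrt P = matrix_inv P"
proof -
  obtain M where M: "pos_def M" "M ** M = matrix_inv P"
    using pos_def_sqrt_exists[OF pos_def_matrix_inv[OF assms]] .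
  have "\<exists>!M. pos_def M \<and> M ** M = matrix_inv P"
  proof (rule ex1I)
    show "pos_def M \<and> M ** M = matrix_inv P" using M by simp
    show "M' = M" if "pos_def M' \<and> M' ** M' = matrix_inv P" for M'
      using that M pos_def_sqrt_unique[of M' M] by simp
  qed
  then have "pos_def (inv_sqrt P) \<and> inv_sqrt P ** inv_sqrt P = matrix_inv P"
    unfolding inv_sqrt_def by (rule theI')
  then show "pos_def (inv_sqrt P)" "inv_sqrt P ** inv_sqrt P = matrix_inv P" by auto
qed

lemma ellipsoid_subset_inv_sqrt_image:
  assumes "pos_def (P :: real^'n^'n)"
  shows "ellipsoid P \<subseteq> (\<lambda>u. inv_sqrt P *v u) ` cball 0 1"
proof
  fix p assume "p \<in> ellipsoid P"
  define G where "G = inv_sqrt P"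
  have "sym_mat G" and GG: "G ** G = matrix_inv P"
    using inv_sqrt[OF assms] unfolding G_def pos_def_def by auto
  define u where "u = G *v (P *v p)"
  have "G *v u = (G ** G) *v (P *v p)" by (simp add: u_def matrix_vector_mul_assoc matrix_mul_assoc)
  then have Gu: "G *v u = p"
    unfolding GG using matrix_inv_mult_vector(2)[OF pos_def_invertible[OF assms]] by simp
  have "(norm u)\<^sup>2 = (P *v p) \<bullet> (G *v u)"
    unfolding u_def power2_norm_eq_inner using sym_mat_inner[OF \<open>sym_mat G\<close>] by simp
  also have "\<dots> \<le> 1"
    using \<open>p \<in> ellipsoid P\<close> by (simp add: Gu ellipsoid_def inner_commute)
  finally have "u \<in> cball 0 1" by (simp add: power_le_one_iff)
  with Gu show "p \<in> (\<lambda>u. inv_sqrt P *v u) ` cball 0 1" unfolding G_def by blast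
qed

section \<open>Dissipativity of the closed loop\<close>

definition hinf_lmi ::
    "real^'N^'N \<Rightarrow> real^'d^'N \<Rightarrow> real^'u^'N \<Rightarrow> real^'N^'e \<Rightarrow> real^'d^'e \<Rightarrow> real^'u^'e
      \<Rightarrow> real^'N^'N \<Rightarrow> real^'N^'u \<Rightarrow> real \<Rightarrow> real \<Rightarrow> real^(('N + 'N) + ('d + 'e))^(('N + 'N) + ('d + 'e))"
  where "hinf_lmi A B1 B2 C1 D11 D12 R S b f2 =
    block2
      (block2 (- R) (A ** R + B2 ** S) (transpose (A ** R + B2 ** S)) (- R))
      (blockr B1 (0 :: real^'e^'N) (0 :: real^'d^'N) (transpose (C1 ** R + D12 ** S)))
      (blockr (transpose B1) (0 :: real^'N^'d) (0 :: real^'N^'e) (C1 ** R + D12 ** S))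
      (block2 (- (f2 *\<^sub>R mat 1)) (transpose D11) D11 (- (b *\<^sub>R mat 1)))"

lemma hinf_lmi_quadratic_form:
  "vjoin (vjoin v1 v2) (vjoin d v4) \<bullet>
      (hinf_lmi A B1 B2 C1 D11 D12 R S b f2 *v vjoin (vjoin v1 v2) (vjoin d v4))
    = - (v1 \<bullet> (R *v v1)) + 2 * (v1 \<bullet> ((A ** R + B2 ** S) *v v2 + B1 *v d)) - v2 \<bullet> (R *v v2)
      + 2 * (v4 \<bullet> ((C1 ** R + D12 ** S) *v v2 + D11 *v d)) - f2 * (d \<bullet> d) - b * (v4 \<bullet> v4)"
  by (simp add: hinf_lmi_def block2_mult_vjoin blockr_mult_vjoin inner_vjoin inner_vector_matrix
      matrix_vector_mult_uminus_left scaleR_matrix_vector_assoc[symmetric] matrix_vector_mult_scaleR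
      inner_add_left inner_add_right inner_commute algebra_simps)

lemma hinf_lmi_dissipation:
  fixes R X :: "real^'N^'N"
  assumes "R ** X = mat 1" "0 < b" "neg_def (hinf_lmi A B1 B2 C1 D11 D12 R S b f2)"
  obtains \<epsilon> where "0 < \<epsilon>"
    "\<And>z d. (A *v z + B1 *v d + B2 *v (S ** X *v z)) \<bullet> (X *v (A *v z + B1 *v d + B2 *v (S ** X *v z)))
        + (norm (C1 *v z + D11 *v d + D12 *v (S ** X *v z)))\<^sup>2 / b + \<epsilon> * (norm (X *v z))\<^sup>2
      \<le> z \<bullet> (X *v z) + f2 * (norm d)\<^sup>2"
proof -
  let ?L = "hinf_lmi A B1 B2 C1 D11 D12 R S b f2"
  obtain \<epsilon> where "0 < \<epsilon>" and coercive: "\<And>w. \<epsilon> * (norm w)\<^sup>2 \<le> w \<bullet> (- ?L *v w)"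
    using pos_def_coercive assms(3) unfolding neg_def_def by blast
  have RX: "R *v (X *v z) = z" for z by (simp add: matrix_vector_mul_assoc assms(1))
  have quad_X: "(X *v z) \<bullet> (R *v (X *v z)) = z \<bullet> (X *v z)" for z
    by (simp add: RX inner_commute)
  have step: "(A *v z + B1 *v d + B2 *v (S ** X *v z)) \<bullet> (X *v (A *v z + B1 *v d + B2 *v (S ** X *v z)))
        + (norm (C1 *v z + D11 *v d + D12 *v (S ** X *v z)))\<^sup>2 / b + \<epsilon> * (norm (X *v z))\<^sup>2
      \<le> z \<bullet> (X *v z) + f2 * (norm d)\<^sup>2" for z d
  proof -
    define z' where "z' = A *v z + B1 *v d + B2 *v (S ** X *v z)"
    define e where "e = C1 *v z + D11 *v d + D12 *v (S ** X *v z)"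
    define w where "w = vjoin (vjoin (X *v z') (X *v z)) (vjoin d (e /\<^sub>R b))"
    have "(A ** R + B2 ** S) *v (X *v z) + B1 *v d = z'"
      unfolding z'_def
      by (simp add: matrix_vector_mult_add_rdistrib matrix_vector_mul_assoc[symmetric] RX algebra_simps)
    moreover have "(C1 ** R + D12 ** S) *v (X *v z) + D11 *v d = e"
      unfolding e_def
      by (simp add: matrix_vector_mult_add_rdistrib matrix_vector_mul_assoc[symmetric] RX algebra_simps)
    ultimately have "w \<bullet> (?L *v w) = z' \<bullet> (X *v z') - z \<bullet> (X *v z) + (norm e)\<^sup>2 / b - f2 * (norm d)\<^sup>2"
      unfolding w_def hinf_lmi_quadratic_form quad_X using \<open>0 < b\<close>
      by (simp add: power2_norm_eq_inner inner_commute field_simps)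
    moreover have "\<epsilon> * (norm (X *v z))\<^sup>2 \<le> \<epsilon> * (norm w)\<^sup>2"
      unfolding w_def norm_vjoin_power2 using \<open>0 < \<epsilon>\<close> by simp
    moreover have "w \<bullet> (- ?L *v w) = - (w \<bullet> (?L *v w))"
      by (simp add: matrix_vector_mult_uminus_left)
    ultimately show ?thesis
      using coercive[of w] unfolding z'_def e_def by linarith
  qed
  show thesis by (rule that[OF \<open>0 < \<epsilon>\<close> step])
qed

lemma cl_dissipation_sum:
  fixes V g :: "real^'N \<Rightarrow> real" and h :: "real^'e \<Rightarrow> real" and r :: "real^'d \<Rightarrow> real"
  assumes step: "\<And>z d. V (A *v z + B1 *v d + B2 *v (K *v z)) + h (C1 *v z + D11 *v d + D12 *v (K *v z))
      + g z \<le> V z + r d"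
  shows "V (cl_state A B1 B2 K z0 d n) + (\<Sum>k<n. h (cl_output A B1 B2 C1 D11 D12 K z0 d k))
      + (\<Sum>k<n. g (cl_state A B1 B2 K z0 d k)) \<le> V z0 + (\<Sum>k<n. r (d k))"
proof (induction n)
  case (Suc n)
  then show ?case
    using step[of "cl_state A B1 B2 K z0 d n" "d n"] by (simp add: cl_output_def Let_def)
qed simp

lemma cl_stableI:
  assumes "R ** X = mat 1"
    and "\<And>z0 n. (\<Sum>k<n. (norm (X *v cl_state A B1 B2 K z0 (\<lambda>_. 0) k))\<^sup>2) \<le> C z0"
  shows "cl_stable A B1 B2 K"
  unfolding cl_stable_def
proof
  fix z0
  let ?z = "\<lambda>k. cl_state A B1 B2 K z0 (\<lambda>_. 0) k"
  have "summable (\<lambda>k. (norm (X *v ?z k))\<^sup>2)"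
    using assms(2) by (intro summableI_nonneg_bounded) auto
  then have "(\<lambda>k. (norm (X *v ?z k))\<^sup>2) \<longlonglongrightarrow> 0" by (rule summable_LIMSEQ_zero)
  then have "(\<lambda>k. sqrt ((norm (X *v ?z k))\<^sup>2)) \<longlonglongrightarrow> sqrt 0" by (rule tendsto_real_sqrt)
  then have "(\<lambda>k. X *v ?z k) \<longlonglongrightarrow> 0" by (simp add: tendsto_norm_zero_iff)
  then have "(\<lambda>k. R *v (X *v ?z k)) \<longlonglongrightarrow> R *v 0"
    by (rule bounded_linear.tendsto[OF matrix_vector_mul_bounded_linear])
  then show "?z \<longlonglongrightarrow> 0" by (simp add: matrix_vector_mul_assoc assms(1))
qed

lemma hinf_lmi_energy:
  fixes R :: "real^'N^'N"
  assumes "pos_def R" "0 < b" "neg_def (hinf_lmi A B1 B2 C1 D11 D12 R S b f2)"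
  obtains \<epsilon> where "0 < \<epsilon>" "\<And>z0 d n.
      (\<Sum>k<n. (norm (cl_output A B1 B2 C1 D11 D12 (S ** matrix_inv R) z0 d k))\<^sup>2) / b
        + \<epsilon> * (\<Sum>k<n. (norm (matrix_inv R *v cl_state A B1 B2 (S ** matrix_inv R) z0 d k))\<^sup>2)
      \<le> z0 \<bullet> (matrix_inv R *v z0) + f2 * (\<Sum>k<n. (norm (d k))\<^sup>2)"
proof -
  let ?X = "matrix_inv R"
  have RX: "R ** ?X = mat 1" by (rule matrix_inv_inverse(1)[OF pos_def_invertible[OF assms(1)]])
  obtain \<epsilon> where "0 < \<epsilon>" and step: "\<And>z d.
      (A *v z + B1 *v d + B2 *v (S ** ?X *v z)) \<bullet> (?X *v (A *v z + B1 *v d + B2 *v (S ** ?X *v z)))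
        + (norm (C1 *v z + D11 *v d + D12 *v (S ** ?X *v z)))\<^sup>2 / b + \<epsilon> * (norm (?X *v z))\<^sup>2
      \<le> z \<bullet> (?X *v z) + f2 * (norm d)\<^sup>2"
    using hinf_lmi_dissipation[OF RX assms(2,3)] by blast
  have "(\<Sum>k<n. (norm (cl_output A B1 B2 C1 D11 D12 (S ** ?X) z0 d k))\<^sup>2) / b
        + \<epsilon> * (\<Sum>k<n. (norm (?X *v cl_state A B1 B2 (S ** ?X) z0 d k))\<^sup>2)
      \<le> z0 \<bullet> (?X *v z0) + f2 * (\<Sum>k<n. (norm (d k))\<^sup>2)" for z0 d n
    using cl_dissipation_sum[where V = "\<lambda>z. z \<bullet> (?X *v z)" and h = "\<lambda>e. (norm e)\<^sup>2 / b"
        and g = "\<lambda>z. \<epsilon> * (norm (?X *v z))\<^sup>2" and r = "\<lambda>d. f2 * (norm d)\<^sup>2", OF step, of z0 d n]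
      pos_def_nonneg[OF pos_def_matrix_inv[OF assms(1)], of "cl_state A B1 B2 (S ** ?X) z0 d n"]
    by (simp add: sum_divide_distrib sum_distrib_left)
  with \<open>0 < \<epsilon>\<close> show thesis by (rule that)
qed

lemma hinf_lmi_cl_stable:
  fixes R :: "real^'N^'N"
  assumes "pos_def R" "0 < b" "neg_def (hinf_lmi A B1 B2 C1 D11 D12 R S b f2)"
  shows "cl_stable A B1 B2 (S ** matrix_inv R)"
proof -
  let ?X = "matrix_inv R" and ?e = "cl_output A B1 B2 C1 D11 D12 (S ** matrix_inv R)"
    and ?z = "cl_state A B1 B2 (S ** matrix_inv R)"
  obtain \<epsilon> where "0 < \<epsilon>" and energy: "\<And>z0 d n.
      (\<Sum>k<n. (norm (?e z0 d k))\<^sup>2) / b + \<epsilon> * (\<Sum>k<n. (norm (?X *v ?z z0 d k))\<^sup>2)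
      \<le> z0 \<bullet> (?X *v z0) + f2 * (\<Sum>k<n. (norm (d k))\<^sup>2)"
    using hinf_lmi_energy[OF assms] by blast
  show ?thesis
  proof (rule cl_stableI[OF matrix_inv_inverse(1)[OF pos_def_invertible[OF assms(1)]]])
    fix z0 n
    have "0 \<le> (\<Sum>k<n. (norm (?e z0 (\<lambda>_. 0) k))\<^sup>2) / b"
      using \<open>0 < b\<close> by (intro divide_nonneg_pos sum_nonneg) simp_all
    then have "\<epsilon> * (\<Sum>k<n. (norm (?X *v ?z z0 (\<lambda>_. 0) k))\<^sup>2)
        \<le> (\<Sum>k<n. (norm (?e z0 (\<lambda>_. 0) k))\<^sup>2) / b + \<epsilon> * (\<Sum>k<n. (norm (?X *v ?z z0 (\<lambda>_. 0) k))\<^sup>2)"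
      by (rule add_increasing) simp
    also have "\<dots> \<le> z0 \<bullet> (?X *v z0)" using energy[of z0 "\<lambda>_. 0" n] by simp
    finally show "(\<Sum>k<n. (norm (?X *v ?z z0 (\<lambda>_. 0) k))\<^sup>2) \<le> z0 \<bullet> (?X *v z0) / \<epsilon>"
      using \<open>0 < \<epsilon>\<close> by (simp add: le_divide_eq mult.commute)
  qed
qed

lemma hinf_lmi_output_energy_le:
  fixes R :: "real^'N^'N"
  assumes "pos_def R" "0 < b" "neg_def (hinf_lmi A B1 B2 C1 D11 D12 R S b f2)"
  shows "(\<Sum>k<n. (norm (cl_output A B1 B2 C1 D11 D12 (S ** matrix_inv R) z0 d k))\<^sup>2)
    \<le> b * (z0 \<bullet> (matrix_inv R *v z0) + f2 * (\<Sum>k<n. (norm (d k))\<^sup>2))"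
proof -
  let ?X = "matrix_inv R" and ?e = "cl_output A B1 B2 C1 D11 D12 (S ** matrix_inv R)"
    and ?z = "cl_state A B1 B2 (S ** matrix_inv R)"
  obtain \<epsilon> where "0 < \<epsilon>" and energy: "\<And>z0 d n.
      (\<Sum>k<n. (norm (?e z0 d k))\<^sup>2) / b + \<epsilon> * (\<Sum>k<n. (norm (?X *v ?z z0 d k))\<^sup>2)
      \<le> z0 \<bullet> (?X *v z0) + f2 * (\<Sum>k<n. (norm (d k))\<^sup>2)"
    using hinf_lmi_energy[OF assms] by blast
  have "0 \<le> \<epsilon> * (\<Sum>k<n. (norm (?X *v ?z z0 d k))\<^sup>2)"
    using \<open>0 < \<epsilon>\<close> by (simp add: sum_nonneg)
  then have "(\<Sum>k<n. (norm (?e z0 d k))\<^sup>2) / b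
      \<le> (\<Sum>k<n. (norm (?e z0 d k))\<^sup>2) / b + \<epsilon> * (\<Sum>k<n. (norm (?X *v ?z z0 d k))\<^sup>2)"
    by (rule add_increasing2) simp
  also have "\<dots> \<le> z0 \<bullet> (?X *v z0) + f2 * (\<Sum>k<n. (norm (d k))\<^sup>2)" by (rule energy)
  finally show ?thesis using \<open>0 < b\<close> by (simp add: pos_divide_le_eq mult.commute)
qed

lemma l2norm_le_1D:
  assumes "l2norm d \<le> 1"
  shows "(\<Sum>k<n. (norm (d k))\<^sup>2) \<le> 1"
proof -
  have "summable (\<lambda>k. (norm (d k))\<^sup>2)"
    using assms by (auto simp: l2norm_def top_unique split: if_splits)
  moreover have "(\<Sum>k. (norm (d k))\<^sup>2) \<le> 1"
    using assms calculation by (simp add: l2norm_def)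
  ultimately show ?thesis using sum_le_suminf[of _ "{..<n}"] by fastforce
qed

lemma l2norm_le_sqrtI:
  assumes "\<And>n. (\<Sum>k<n. (norm (s k))\<^sup>2) \<le> C"
  shows "l2norm s \<le> ennreal (sqrt C)"
proof -
  have "summable (\<lambda>k. (norm (s k))\<^sup>2)" using assms by (intro summableI_nonneg_bounded) auto
  moreover have "(\<Sum>k. (norm (s k))\<^sup>2) \<le> C" using calculation assms by (rule suminf_le_const)
  ultimately show ?thesis by (simp add: l2norm_def ennreal_leI)
qed

lemma init_lmi_quadratic_form:
  fixes R :: "real^('n::finite + 'm::finite)^('n + 'm)" and G :: "real^'n^'n" and H :: "real^'m^'m"
  shows "vjoin (vjoin u1 u2) v \<bullet>
      (block2
        (block2 (f11 *\<^sub>R mat 1) (0 :: real^'m^'n) (0 :: real^'n^'m) (f12 *\<^sub>R mat 1))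
        (transpose (block2 G (0 :: real^'m^'n) (0 :: real^'n^'m) H))
        (block2 G (0 :: real^'m^'n) (0 :: real^'n^'m) H)
        R *v vjoin (vjoin u1 u2) v)
    = f11 * (u1 \<bullet> u1) + f12 * (u2 \<bullet> u2) + 2 * (vjoin (G *v u1) (H *v u2) \<bullet> v) + v \<bullet> (R *v v)"
  by (simp add: block2_mult_vjoin inner_vjoin inner_vector_matrix scaleR_matrix_vector_assoc[symmetric]
      matrix_vector_mult_scaleR inner_add_left inner_add_right inner_commute algebra_simps)

lemma init_set_storage_le:
  fixes R :: "real^('n::finite + 'm::finite)^('n + 'm)" and P :: "real^'n^'n" and Q :: "real^'m^'m"
  assumes "pos_def P" "pos_def Q" "pos_def R" "0 \<le> f11" "0 \<le> f12"
    and LMI: "pos_def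
      (block2
        (block2 (f11 *\<^sub>R mat 1) (0 :: real^'m^'n) (0 :: real^'n^'m) (f12 *\<^sub>R mat 1))
        (transpose (block2 (inv_sqrt P) (0 :: real^'m^'n) (0 :: real^'n^'m) (inv_sqrt Q)))
        (block2 (inv_sqrt P) (0 :: real^'m^'n) (0 :: real^'n^'m) (inv_sqrt Q))
        R)"
    and "z0 \<in> init_set P Q"
  shows "z0 \<bullet> (matrix_inv R *v z0) \<le> f11 + f12"
proof -
  define X where "X = matrix_inv R"
  have "R ** X = mat 1" unfolding X_def by (rule matrix_inv_inverse(1)[OF pos_def_invertible[OF \<open>pos_def R\<close>]])
  obtain u1 u2 where z0: "z0 = vjoin (inv_sqrt P *v u1) (inv_sqrt Q *v u2)"
    and "norm u1 \<le> 1" "norm u2 \<le> 1"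
    using \<open>z0 \<in> init_set P Q\<close> ellipsoid_subset_inv_sqrt_image[OF \<open>pos_def P\<close>]
      ellipsoid_subset_inv_sqrt_image[OF \<open>pos_def Q\<close>]
    unfolding init_set_def by fastforce
  have "0 \<le> f11 * (u1 \<bullet> u1) + f12 * (u2 \<bullet> u2) + 2 * (z0 \<bullet> - (X *v z0)) + (- (X *v z0)) \<bullet> (R *v - (X *v z0))"
    using pos_def_nonneg[OF LMI, of "vjoin (vjoin u1 u2) (- (X *v z0))"]
    unfolding init_lmi_quadratic_form z0 .
  also have "\<dots> = f11 * (norm u1)\<^sup>2 + f12 * (norm u2)\<^sup>2 - z0 \<bullet> (X *v z0)"
    by (simp add: matrix_vector_mult_uminus_right matrix_vector_mul_assoc \<open>R ** X = mat 1\<close>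
        power2_norm_eq_inner inner_commute)
  also have "\<dots> \<le> f11 + f12 - z0 \<bullet> (X *v z0)"
    using \<open>norm u1 \<le> 1\<close> \<open>norm u2 \<le> 1\<close> \<open>0 \<le> f11\<close> \<open>0 \<le> f12\<close>
    by (simp add: mult_left_le power_le_one add_mono)
  finally show ?thesis unfolding X_def by simp
qed

theorem corollary1:
  fixes A :: "real^('n::finite + 'm::finite)^('n + 'm)"
    and B1 :: "real^('d::finite)^('n + 'm)"
    and B2 :: "real^('u::finite)^('n + 'm)"
    and C1 :: "real^('n + 'm)^('e::finite)"
    and D11 :: "real^'d^'e"
    and D12 :: "real^'u^'e"
    and P :: "real^'n^'n" and Q :: "real^'m^'m"
    and R :: "real^('n + 'm)^('n + 'm)"
    and S :: "real^('n + 'm)^'u"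
    and b f11 f12 f2 \<gamma> :: real
  assumes P_pd: "pos_def P" and Q_pd: "pos_def Q"
    and R_pd: "pos_def R"
    and pos: "0 < b" "0 < f11" "0 < f12" "0 < f2"
    and LMI1: "neg_def
      (block2
        (block2 (- R) (A ** R + B2 ** S) (transpose (A ** R + B2 ** S)) (- R))
        (blockr B1 (0 :: real^'e^('n + 'm)) (0 :: real^'d^('n + 'm)) (transpose (C1 ** R + D12 ** S)))
        (blockr (transpose B1) (0 :: real^('n + 'm)^'d) (0 :: real^('n + 'm)^'e) (C1 ** R + D12 ** S))
        (block2 (- (f2 *\<^sub>R mat 1)) (transpose D11) D11 (- (b *\<^sub>R mat 1))))"
    and cost: "b + f11 + f12 + f2 < 2 * \<gamma>"
    and LMI2: "pos_def
      (block2
        (block2 (f11 *\<^sub>R mat 1) (0 :: real^'m^'n) (0 :: real^'n^'m) (f12 *\<^sub>R mat 1))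
        (transpose (block2 (inv_sqrt P) (0 :: real^'m^'n) (0 :: real^'n^'m) (inv_sqrt Q)))
        (block2 (inv_sqrt P) (0 :: real^'m^'n) (0 :: real^'n^'m) (inv_sqrt Q))
        R)"
  shows "cl_stable A B1 B2 (S ** matrix_inv R) \<and>
    (SUP dz \<in> {(d, z0). l2norm d \<le> 1 \<and> z0 \<in> init_set P Q}.
        l2norm (cl_output A B1 B2 C1 D11 D12 (S ** matrix_inv R) (snd dz) (fst dz)))
      < ennreal \<gamma>"
proof -
  note hinf = LMI1[folded hinf_lmi_def]
  have "l2norm (cl_output A B1 B2 C1 D11 D12 (S ** matrix_inv R) z0 d)
      \<le> ennreal (sqrt (b * (f11 + f12 + f2)))" if "l2norm d \<le> 1" "z0 \<in> init_set P Q" for d z0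
  proof (rule l2norm_le_sqrtI)
    fix n
    have "z0 \<bullet> (matrix_inv R *v z0) \<le> f11 + f12"
      using init_set_storage_le[OF P_pd Q_pd R_pd _ _ LMI2 that(2)] pos by simp
    moreover have "f2 * (\<Sum>k<n. (norm (d k))\<^sup>2) \<le> f2"
      using l2norm_le_1D[OF that(1)] pos(4) by (simp add: mult_left_le)
    ultimately show "(\<Sum>k<n. (norm (cl_output A B1 B2 C1 D11 D12 (S ** matrix_inv R) z0 d k))\<^sup>2)
        \<le> b * (f11 + f12 + f2)"
      using hinf_lmi_output_energy_le[OF R_pd pos(1) hinf, of z0 d n] pos(1)
        by (smt (verit) mult_left_mono)
  qed
  then have "(SUP dz \<in> {(d, z0). l2norm d \<le> 1 \<and> z0 \<in> init_set P Q}.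
      l2norm (cl_output A B1 B2 C1 D11 D12 (S ** matrix_inv R) (snd dz) (fst dz)))
    \<le> ennreal (sqrt (b * (f11 + f12 + f2)))"
    by (intro SUP_least) auto
  moreover have "ennreal (sqrt (b * (f11 + f12 + f2))) < ennreal \<gamma>"
    using arith_geo_mean_sqrt[of b "f11 + f12 + f2"] pos cost by (intro ennreal_lessI) auto
  ultimately show ?thesis using hinf_lmi_cl_stable[OF R_pd pos(1) hinf]
    by (blast intro: order.strict_trans1)
qed

end
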